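(* Let $G$ be a modular noetherian right $\ell$-group with degree homomorphism $\deg : G \to \mathbb{Z}$. Then for all $g,h \in G$, \[ \deg(g) + \deg(h) = \deg(g \vee h) + \deg(g \wedge h). \]
   Context: A right $\ell$-group is a group $G$ (identity $e$) with a right-invariant partial order under which $G$ is a lattice ($\wedge$, $\vee$). It is modular if the lattice is modular. It is noetherian if for each $g$ the set $\{h \geq g\}$ satisfies the descending chain condition and the set $\{h \leq g\}$ satisfies the ascending chain condition. Let $G^- = \{g \leq e\}$, and let $X(G^-)$ be the set of elements covered by $e$. In such a group every $g \in G^-$ is a product of elements of $X(G^-)$, and all such factorizations have the same length. The degree homomorphism $\deg : G \to \mathbb{Z}$ is the unique group homomorphism assigning to each $g \in G^-$ this length. *)

theory Defs
  imports "HOL-Algebra.Group"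
begin

definition right_lgroup ::
  "('a, 'b) monoid_scheme \<Rightarrow> ('a \<Rightarrow> 'a \<Rightarrow> bool) \<Rightarrow> ('a \<Rightarrow> 'a \<Rightarrow> 'a) \<Rightarrow> ('a \<Rightarrow> 'a \<Rightarrow> 'a) \<Rightarrow> bool"
where
  "right_lgroup G leq jn mt \<longleftrightarrow>
     group G \<and>
     (\<forall>x\<in>carrier G. leq x x) \<and>
     (\<forall>x\<in>carrier G. \<forall>y\<in>carrier G. leq x y \<and> leq y x \<longrightarrow> x = y) \<and>
     (\<forall>x\<in>carrier G. \<forall>y\<in>carrier G. \<forall>z\<in>carrier G. leq x y \<and> leq y z \<longrightarrow> leq x z) \<and>
     (\<forall>x\<in>carrier G. \<forall>y\<in>carrier G. \<forall>z\<in>carrier G.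
        leq x y \<longrightarrow> leq (x \<otimes>\<^bsub>G\<^esub> z) (y \<otimes>\<^bsub>G\<^esub> z)) \<and>
     (\<forall>x\<in>carrier G. \<forall>y\<in>carrier G.
        jn x y \<in> carrier G \<and> leq x (jn x y) \<and> leq y (jn x y) \<and>
        (\<forall>z\<in>carrier G. leq x z \<and> leq y z \<longrightarrow> leq (jn x y) z)) \<and>
     (\<forall>x\<in>carrier G. \<forall>y\<in>carrier G.
        mt x y \<in> carrier G \<and> leq (mt x y) x \<and> leq (mt x y) y \<and>
        (\<forall>z\<in>carrier G. leq z x \<and> leq z y \<longrightarrow> leq z (mt x y)))"

definition lattice_modular ::
  "'a set \<Rightarrow> ('a \<Rightarrow> 'a \<Rightarrow> bool) \<Rightarrow> ('a \<Rightarrow> 'a \<Rightarrow> 'a) \<Rightarrow> ('a \<Rightarrow> 'a \<Rightarrow> 'a) \<Rightarrow> bool"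
where
  "lattice_modular A leq jn mt \<longleftrightarrow>
     (\<forall>a\<in>A. \<forall>b\<in>A. \<forall>c\<in>A. leq a c \<longrightarrow> jn a (mt b c) = mt (jn a b) c)"

definition lnoetherian ::
  "'a set \<Rightarrow> ('a \<Rightarrow> 'a \<Rightarrow> bool) \<Rightarrow> bool"
where
  "lnoetherian A leq \<longleftrightarrow>
     (\<forall>g\<in>A.
        (\<not> (\<exists>f :: nat \<Rightarrow> 'a. (\<forall>n. f n \<in> A \<and> leq g (f n)) \<and>
              (\<forall>n. leq (f (Suc n)) (f n) \<and> f (Suc n) \<noteq> f n))) \<and>
        (\<not> (\<exists>f :: nat \<Rightarrow> 'a. (\<forall>n. f n \<in> A \<and> leq (f n) g) \<and>
              (\<forall>n. leq (f n) (f (Suc n)) \<and> f (Suc n) \<noteq> f n))))"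

definition neg_cone :: "('a, 'b) monoid_scheme \<Rightarrow> ('a \<Rightarrow> 'a \<Rightarrow> bool) \<Rightarrow> 'a set" where
  "neg_cone G leq = {g \<in> carrier G. leq g \<one>\<^bsub>G\<^esub>}"

definition covered_by_one :: "('a, 'b) monoid_scheme \<Rightarrow> ('a \<Rightarrow> 'a \<Rightarrow> bool) \<Rightarrow> 'a set" where
  "covered_by_one G leq =
     {x \<in> carrier G. leq x \<one>\<^bsub>G\<^esub> \<and> x \<noteq> \<one>\<^bsub>G\<^esub> \<and>
        \<not> (\<exists>z\<in>carrier G. leq x z \<and> leq z \<one>\<^bsub>G\<^esub> \<and> z \<noteq> x \<and> z \<noteq> \<one>\<^bsub>G\<^esub>)}"

definition list_prod :: "('a, 'b) monoid_scheme \<Rightarrow> 'a list \<Rightarrow> 'a" where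
  "list_prod G xs = foldr (\<lambda>x y. x \<otimes>\<^bsub>G\<^esub> y) xs \<one>\<^bsub>G\<^esub>"

definition is_degree_hom ::
  "('a, 'b) monoid_scheme \<Rightarrow> ('a \<Rightarrow> 'a \<Rightarrow> bool) \<Rightarrow> ('a \<Rightarrow> int) \<Rightarrow> bool"
where
  "is_degree_hom G leq d \<longleftrightarrow>
     (\<forall>x\<in>carrier G. \<forall>y\<in>carrier G. d (x \<otimes>\<^bsub>G\<^esub> y) = d x + d y) \<and>
     (\<forall>g\<in>neg_cone G leq. \<forall>xs. set xs \<subseteq> covered_by_one G leq \<and> list_prod G xs = g
        \<longrightarrow> d g = int (length xs))"

end

theory Submission
  imports Defs
begin

text \<open>Write \<open>r = - deg\<close>. Right multiplication by \<open>y\<inverse>\<close> is an order automorphism, so it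
  turns a cover \<open>x \<prec> y\<close> into the cover \<open>x y\<inverse> \<prec> e\<close>; hence \<open>r\<close> grows by exactly one along
  every cover. In a modular lattice the maps \<open>x \<mapsto> x \<squnion> b\<close> and \<open>z \<mapsto> z \<sqinter> a\<close> are inverse
  isomorphisms between the intervals \<open>[a \<sqinter> b, a]\<close> and \<open>[b, a \<squnion> b]\<close>, so they preserve
  covers. By the chain conditions one climbs from \<open>a \<sqinter> b\<close> to \<open>a\<close> along covers;
  transporting the climb to \<open>[b, a \<squnion> b]\<close> gives \<open>r a - r (a \<sqinter> b) = r (a \<squnion> b) - r b\<close>.\<close>

locale carrier_lattice =
  fixes A :: "'a set"
    and leq :: "'a \<Rightarrow> 'a \<Rightarrow> bool"
    and jn mt :: "'a \<Rightarrow> 'a \<Rightarrow> 'a"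
  assumes refl: "x \<in> A \<Longrightarrow> leq x x"
    and antisym: "x \<in> A \<Longrightarrow> y \<in> A \<Longrightarrow> leq x y \<Longrightarrow> leq y x \<Longrightarrow> x = y"
    and trans: "x \<in> A \<Longrightarrow> y \<in> A \<Longrightarrow> z \<in> A \<Longrightarrow> leq x y \<Longrightarrow> leq y z \<Longrightarrow> leq x z"
    and join_closed: "x \<in> A \<Longrightarrow> y \<in> A \<Longrightarrow> jn x y \<in> A"
    and join_upper1: "x \<in> A \<Longrightarrow> y \<in> A \<Longrightarrow> leq x (jn x y)"
    and join_upper2: "x \<in> A \<Longrightarrow> y \<in> A \<Longrightarrow> leq y (jn x y)"
    and join_least: "x \<in> A \<Longrightarrow> y \<in> A \<Longrightarrow> z \<in> A \<Longrightarrow> leq x z \<Longrightarrow> leq y z \<Longrightarrow> leq (jn x y) z"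
    and meet_closed: "x \<in> A \<Longrightarrow> y \<in> A \<Longrightarrow> mt x y \<in> A"
    and meet_lower1: "x \<in> A \<Longrightarrow> y \<in> A \<Longrightarrow> leq (mt x y) x"
    and meet_lower2: "x \<in> A \<Longrightarrow> y \<in> A \<Longrightarrow> leq (mt x y) y"
    and meet_greatest: "x \<in> A \<Longrightarrow> y \<in> A \<Longrightarrow> z \<in> A \<Longrightarrow> leq z x \<Longrightarrow> leq z y \<Longrightarrow> leq z (mt x y)"
begin

lemma join_comm: "x \<in> A \<Longrightarrow> y \<in> A \<Longrightarrow> jn x y = jn y x"
  by (rule antisym) (auto intro: join_closed join_least join_upper1 join_upper2)

lemma meet_comm: "x \<in> A \<Longrightarrow> y \<in> A \<Longrightarrow> mt x y = mt y x"
  by (rule antisym) (auto intro: meet_closed meet_greatest meet_lower1 meet_lower2)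

lemma join_absorb1: "x \<in> A \<Longrightarrow> y \<in> A \<Longrightarrow> leq y x \<Longrightarrow> jn x y = x"
  by (rule antisym) (auto intro: join_closed join_least join_upper1 refl)

lemma join_absorb2: "x \<in> A \<Longrightarrow> y \<in> A \<Longrightarrow> leq x y \<Longrightarrow> jn x y = y"
  by (rule antisym) (auto intro: join_closed join_least join_upper2 refl)

lemma meet_absorb2: "x \<in> A \<Longrightarrow> y \<in> A \<Longrightarrow> leq y x \<Longrightarrow> mt x y = y"
  by (rule antisym) (auto intro: meet_closed meet_greatest meet_lower2 refl)

lemma join_mono:
  "x \<in> A \<Longrightarrow> y \<in> A \<Longrightarrow> b \<in> A \<Longrightarrow> leq x y \<Longrightarrow> leq (jn x b) (jn y b)"
  by (blast intro: join_least join_closed join_upper2 trans[OF _ _ _ _ join_upper1])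

definition covers :: "'a \<Rightarrow> 'a \<Rightarrow> bool" where
  "covers x y \<longleftrightarrow> x \<in> A \<and> y \<in> A \<and> leq x y \<and> x \<noteq> y \<and>
     (\<forall>z\<in>A. leq x z \<and> leq z y \<longrightarrow> z = x \<or> z = y)"

end

locale noetherian_carrier_lattice = carrier_lattice +
  assumes noetherian: "lnoetherian A leq"
begin

lemma wf_strict_above:
  assumes "x \<in> A"
  shows "wf {(y, z). y \<in> A \<and> z \<in> A \<and> leq x y \<and> leq y z \<and> y \<noteq> z}"
  unfolding wf_iff_no_infinite_down_chain
proof (intro notI, elim exE)
  fix f assume chain: "\<forall>i. (f (Suc i), f i) \<in> {(y, z). y \<in> A \<and> z \<in> A \<and> leq x y \<and> leq y z \<and> y \<noteq> z}"
  have "f n \<in> A \<and> leq x (f n)" "leq (f (Suc n)) (f n) \<and> f (Suc n) \<noteq> f n" for n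
    using chain[rule_format, of n] assms trans[of x "f (Suc n)" "f n"] by auto
  then show False
    using noetherian assms unfolding lnoetherian_def by blast
qed

lemma wf_strict_below:
  assumes "a \<in> A"
  shows "wf {(z, y). y \<in> A \<and> z \<in> A \<and> leq z a \<and> leq y z \<and> y \<noteq> z}"
  unfolding wf_iff_no_infinite_down_chain
proof (intro notI, elim exE)
  fix f assume chain: "\<forall>i. (f (Suc i), f i) \<in> {(z, y). y \<in> A \<and> z \<in> A \<and> leq z a \<and> leq y z \<and> y \<noteq> z}"
  have "f n \<in> A \<and> leq (f n) a" "leq (f n) (f (Suc n)) \<and> f (Suc n) \<noteq> f n" for n
    using chain[rule_format, of n] assms trans[of "f n" "f (Suc n)" a] by auto
  then show False
    using noetherian assms unfolding lnoetherian_def by blast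
qed

lemma exists_covers_below:
  assumes "x \<in> A" "a \<in> A" "leq x a" "x \<noteq> a"
  shows "\<exists>y. covers x y \<and> leq y a"
proof -
  define Q where "Q = {y \<in> A. leq x y \<and> leq y a \<and> y \<noteq> x}"
  have "a \<in> Q"
    using assms refl unfolding Q_def by auto
  then obtain y where "y \<in> Q"
    and minimal: "\<And>z. (z, y) \<in> {(y, z). y \<in> A \<and> z \<in> A \<and> leq x y \<and> leq y z \<and> y \<noteq> z} \<Longrightarrow> z \<notin> Q"
    by (rule wfE_min[OF wf_strict_above[OF \<open>x \<in> A\<close>]]) blast
  then have "y \<in> A" "leq x y" "leq y a" "y \<noteq> x"
    unfolding Q_def by auto
  have "z = x \<or> z = y" if "z \<in> A" "leq x z" "leq z y" for z
  proof (rule ccontr)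
    assume "\<not> (z = x \<or> z = y)"
    then have "z \<in> Q" "z \<notin> Q"
      using that minimal[of z] \<open>y \<in> A\<close> \<open>leq y a\<close> assms trans[of z y a] unfolding Q_def by auto
    then show False
      by simp
  qed
  then have "covers x y"
    unfolding covers_def using \<open>y \<in> A\<close> \<open>leq x y\<close> \<open>y \<noteq> x\<close> assms by auto
  then show ?thesis
    using \<open>leq y a\<close> by blast
qed

end

locale modular_carrier_lattice = carrier_lattice +
  assumes modular: "lattice_modular A leq jn mt"
begin

lemma modular_law: "x \<in> A \<Longrightarrow> y \<in> A \<Longrightarrow> z \<in> A \<Longrightarrow> leq x z \<Longrightarrow> jn x (mt y z) = mt (jn x y) z"
  using modular unfolding lattice_modular_def by blast

lemma meet_join_transpose:
  assumes "a \<in> A" "b \<in> A" "x \<in> A" "leq (mt a b) x" "leq x a"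
  shows "mt (jn x b) a = x"
proof -
  have "mt (jn x b) a = jn x (mt b a)"
    using modular_law assms by simp
  also have "\<dots> = x"
    using assms by (simp add: meet_comm join_absorb1 meet_closed)
  finally show ?thesis .
qed

lemma join_meet_transpose:
  assumes "a \<in> A" "b \<in> A" "z \<in> A" "leq b z" "leq z (jn a b)"
  shows "jn (mt z a) b = z"
proof -
  have "jn (mt z a) b = jn b (mt a z)"
    using assms by (simp add: join_comm meet_comm meet_closed)
  also have "\<dots> = mt (jn b a) z"
    using modular_law assms by simp
  also have "\<dots> = z"
    using assms by (simp add: join_comm meet_absorb2 join_closed)
  finally show ?thesis .
qed

lemma covers_join_transpose:
  assumes "a \<in> A" "b \<in> A" "leq (mt a b) x" "leq y a" "covers x y"
  shows "covers (jn x b) (jn y b)"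
proof -
  have "x \<in> A" "y \<in> A" "leq x y" "x \<noteq> y"
    and between: "\<And>w. w \<in> A \<Longrightarrow> leq x w \<Longrightarrow> leq w y \<Longrightarrow> w = x \<or> w = y"
    using \<open>covers x y\<close> unfolding covers_def by auto
  have "leq x a" "leq (mt a b) y"
    using assms \<open>x \<in> A\<close> \<open>y \<in> A\<close> \<open>leq x y\<close> by (blast intro: trans meet_closed)+
  then have back_x: "mt (jn x b) a = x" and back_y: "mt (jn y b) a = y"
    using meet_join_transpose assms \<open>x \<in> A\<close> \<open>y \<in> A\<close> by blast+
  have "jn x b \<noteq> jn y b"
    using back_x back_y \<open>x \<noteq> y\<close> by metis
  moreover have "leq (jn x b) (jn y b)"
    using join_mono assms \<open>x \<in> A\<close> \<open>y \<in> A\<close> \<open>leq x y\<close> by blast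
  moreover have "z = jn x b \<or> z = jn y b"
    if "z \<in> A" "leq (jn x b) z" "leq z (jn y b)" for z
  proof -
    have "leq b z"
      using that assms \<open>x \<in> A\<close> by (blast intro: trans join_upper2 join_closed)
    moreover have "leq z (jn a b)"
      using that assms \<open>y \<in> A\<close> join_mono[of y a b] by (blast intro: trans join_closed)
    ultimately have z_eq: "z = jn (mt z a) b"
      using join_meet_transpose assms \<open>z \<in> A\<close> by simp
    have "leq x (mt z a)"
      using that assms \<open>x \<in> A\<close> \<open>leq x a\<close>
      by (blast intro: meet_greatest trans join_upper1 join_closed)
    moreover have "leq (mt z a) (mt (jn y b) a)"
      using that assms \<open>y \<in> A\<close>
      by (blast intro: meet_greatest meet_lower2 trans[OF _ _ _ meet_lower1] meet_closed join_closed)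
    ultimately have "mt z a = x \<or> mt z a = y"
      using between back_y \<open>z \<in> A\<close> assms meet_closed by simp
    then show ?thesis
      using z_eq by auto
  qed
  ultimately show ?thesis
    unfolding covers_def using assms \<open>x \<in> A\<close> \<open>y \<in> A\<close> join_closed by blast
qed

end

locale noetherian_modular_carrier_lattice = noetherian_carrier_lattice + modular_carrier_lattice
begin

lemma rank_interval_transpose:
  fixes r :: "'a \<Rightarrow> int"
  assumes rank: "\<And>x y. covers x y \<Longrightarrow> r y = r x + 1"
    and "a \<in> A" "b \<in> A" "x \<in> A" "leq (mt a b) x" "leq x a"
  shows "r a - r x = r (jn a b) - r (jn x b)"
  using assms(4-)
proof (induction x rule: wf_induct_rule[OF wf_strict_below[OF \<open>a \<in> A\<close>]])
  case (1 x)
  show ?case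
  proof (cases "x = a")
    case False
    then obtain y where "covers x y" "leq y a"
      using exists_covers_below 1 \<open>a \<in> A\<close> by blast
    then have "y \<in> A" "leq x y" "x \<noteq> y"
      unfolding covers_def by auto
    moreover have "leq (mt a b) y"
      using 1 \<open>y \<in> A\<close> \<open>leq x y\<close> assms by (blast intro: trans meet_closed)
    ultimately have "r a - r y = r (jn a b) - r (jn y b)"
      using 1 \<open>leq y a\<close> by blast
    moreover have "covers (jn x b) (jn y b)"
      using covers_join_transpose 1 assms \<open>covers x y\<close> \<open>leq y a\<close> by blast
    ultimately show ?thesis
      using rank[OF \<open>covers x y\<close>] rank[of "jn x b" "jn y b"] by linarith
  qed simp
qed

theorem rank_join_meet:
  fixes r :: "'a \<Rightarrow> int"
  assumes rank: "\<And>x y. covers x y \<Longrightarrow> r y = r x + 1"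
    and "a \<in> A" "b \<in> A"
  shows "r a + r b = r (jn a b) + r (mt a b)"
proof -
  have "r a - r (mt a b) = r (jn a b) - r (jn (mt a b) b)"
    using assms by (intro rank_interval_transpose[OF rank]) (auto intro: meet_closed meet_lower1 refl)
  moreover have "jn (mt a b) b = b"
    using assms meet_closed meet_lower2 join_absorb2 by blast
  ultimately show ?thesis
    by simp
qed

end

locale right_lattice_group = group G + carrier_lattice "carrier G" leq jn mt
  for G :: "('a, 'b) monoid_scheme" (structure) and leq jn mt +
  assumes mult_right_mono:
    "x \<in> carrier G \<Longrightarrow> y \<in> carrier G \<Longrightarrow> z \<in> carrier G \<Longrightarrow> leq x y \<Longrightarrow> leq (x \<otimes> z) (y \<otimes> z)"
begin

lemma mult_right_le_iff:
  assumes "x \<in> carrier G" "y \<in> carrier G" "z \<in> carrier G"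
  shows "leq (x \<otimes> z) (y \<otimes> z) \<longleftrightarrow> leq x y"
  using mult_right_mono[of "x \<otimes> z" "y \<otimes> z" "inv z"] mult_right_mono[of x y z] assms
  by (auto simp: m_assoc)

lemma covers_mult_right:
  assumes "covers x y" "z \<in> carrier G"
  shows "covers (x \<otimes> z) (y \<otimes> z)"
proof -
  have "x \<in> carrier G" "y \<in> carrier G" "leq x y" "x \<noteq> y"
    and between: "\<And>w. w \<in> carrier G \<Longrightarrow> leq x w \<Longrightarrow> leq w y \<Longrightarrow> w = x \<or> w = y"
    using assms unfolding covers_def by auto
  have "w = x \<otimes> z \<or> w = y \<otimes> z"
    if "w \<in> carrier G" "leq (x \<otimes> z) w" "leq w (y \<otimes> z)" for w
  proof -
    have w_eq: "w = (w \<otimes> inv z) \<otimes> z"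
      using that assms by (simp add: m_assoc)
    then have "leq x (w \<otimes> inv z)" "leq (w \<otimes> inv z) y"
      using that assms \<open>x \<in> carrier G\<close> \<open>y \<in> carrier G\<close> mult_right_le_iff[of _ _ z]
      by (metis inv_closed m_closed)+
    then have "w \<otimes> inv z = x \<or> w \<otimes> inv z = y"
      using between that assms by simp
    then show ?thesis
      using w_eq by auto
  qed
  moreover have "x \<otimes> z \<noteq> y \<otimes> z"
    using \<open>x \<noteq> y\<close> \<open>x \<in> carrier G\<close> \<open>y \<in> carrier G\<close> assms right_cancel by blast
  ultimately show ?thesis
    unfolding covers_def
    using assms \<open>x \<in> carrier G\<close> \<open>y \<in> carrier G\<close> \<open>leq x y\<close> mult_right_mono by auto
qed

lemma covered_by_one_iff: "u \<in> covered_by_one G leq \<longleftrightarrow> covers u \<one>"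
  unfolding covered_by_one_def covers_def by auto

lemma degree_mult:
  "is_degree_hom G leq deg \<Longrightarrow> x \<in> carrier G \<Longrightarrow> y \<in> carrier G \<Longrightarrow> deg (x \<otimes> y) = deg x + deg y"
  unfolding is_degree_hom_def by blast

lemma degree_covered_by_one:
  assumes "is_degree_hom G leq deg" "u \<in> covered_by_one G leq"
  shows "deg u = 1"
proof -
  have "u \<in> neg_cone G leq" "list_prod G [u] = u"
    using assms(2) unfolding covered_by_one_def neg_cone_def list_prod_def by auto
  moreover have factorization_length: "\<forall>g\<in>neg_cone G leq. \<forall>xs. set xs \<subseteq> covered_by_one G leq \<and> list_prod G xs = g
      \<longrightarrow> deg g = int (length xs)"
    using assms(1) unfolding is_degree_hom_def by blast
  ultimately show ?thesis
    using assms(2) factorization_length[rule_format, of u "[u]"] by simp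
qed

lemma degree_covers:
  assumes "is_degree_hom G leq deg" "covers x y"
  shows "deg x = deg y + 1"
proof -
  have "x \<in> carrier G" "y \<in> carrier G"
    using \<open>covers x y\<close> unfolding covers_def by auto
  then have "covers (x \<otimes> inv y) \<one>"
    using covers_mult_right[OF \<open>covers x y\<close>, of "inv y"] by simp
  then have "deg (x \<otimes> inv y) = 1"
    using degree_covered_by_one[OF assms(1)] covered_by_one_iff by simp
  moreover have "deg x = deg (x \<otimes> inv y) + deg y"
    using degree_mult[OF assms(1), of "x \<otimes> inv y" y] \<open>x \<in> carrier G\<close> \<open>y \<in> carrier G\<close>
    by (simp add: m_assoc)
  ultimately show ?thesis
    by simp
qed

end

lemma right_lgroup_imp_right_lattice_group:
  assumes "right_lgroup G leq jn mt"
  shows "right_lattice_group G leq jn mt"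
  using assms unfolding right_lgroup_def
  by (elim conjE) (intro right_lattice_group.intro carrier_lattice.intro right_lattice_group_axioms.intro; metis)

theorem mainTheorem4:
  fixes G :: "('a, 'b) monoid_scheme"
    and leq :: "'a \<Rightarrow> 'a \<Rightarrow> bool"
    and jn mt :: "'a \<Rightarrow> 'a \<Rightarrow> 'a"
    and deg :: "'a \<Rightarrow> int"
  assumes "right_lgroup G leq jn mt"
    and "lattice_modular (carrier G) leq jn mt"
    and "lnoetherian (carrier G) leq"
    and "is_degree_hom G leq deg"
    and "g \<in> carrier G" and "h \<in> carrier G"
  shows "deg g + deg h = deg (jn g h) + deg (mt g h)"
proof -
  interpret right_lattice_group G leq jn mt
    using assms(1) by (rule right_lgroup_imp_right_lattice_group)
  interpret noetherian_modular_carrier_lattice "carrier G" leq jn mt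
    using assms(2,3) by unfold_locales
  have "\<And>x y. covers x y \<Longrightarrow> - deg y = - deg x + 1"
    using degree_covers[OF assms(4)] by simp
  from rank_join_meet[of "\<lambda>x. - deg x", OF this assms(5,6)] show ?thesis
    by simp
qed

end
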